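(* For each $\mathfrak{t}\in\{\widetilde{\mathrm{I}},\mathrm{II},\mathrm{III},\widetilde{\mathrm{IV}}\}$, the stuffle product $*_{\mathfrak{t}}$ on $\mathfrak{A}^1_{\mathfrak{t}}$ is commutative and associative.
   Context: All algebras are over $\mathbb{Q}$; words are concatenation products of letters, $\mathbf{1}$ is the empty word. For a free algebra on a set of letters equipped with a commutative bilinear product $[\cdot,\cdot]$ on the span of the letters, the associated stuffle product $*$ is the bilinear product with $\mathbf{1}*u=u*\mathbf{1}=u$ and $(\alpha u)*(\beta v)=\alpha(u*\beta v)+\beta(\alpha u*v)+[\alpha,\beta](u*v)$ for letters $\alpha,\beta$ and words $u,v$. Type $\widetilde{\mathrm{I}}$: $\mathfrak{A}^1_{\widetilde{\mathrm{I}}}$ is the free algebra on letters $\theta$ and $z_k$ ($k\ge1$), with $[z_k,z_l]=z_{k+l}+z_{k+l-1}$, $[\theta,z_k]=[z_k,\theta]=z_{k+1}$, $[\theta,\theta]=z_2-\theta$; $*_{\widetilde{\mathrm{I}}}$ is the associated stuffle. Type II: $\mathfrak{A}^1_{\mathrm{II}}$ is the free algebra on letters $z'_k$ ($k\ge0$), with $[z'_k,z'_l]=z'_{k+l}$; $*_{\mathrm{II}}$ is the associated stuffle. Type III: let $B$ be the free algebra on letters $z_k$ ($k\in\mathbb{Z}$) with stuffle $*_B$ given by $[z_k,z_l]=z_{k+l}$. Let $\mathfrak{A}^1_{\mathrm{III}}$ be the $\mathbb{Q}$-span of the symbols $z'_kw$ ($k\in\mathbb{Z}$, $w$ a word in $B$).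 Set $\sigma_-(z'_nw):=z_nw-z_{n-1}w\in B$, and define bilinearly $z'_ku*_{\mathrm{III}}z'_lv:=z'_k\big(u*_B\sigma_-(z'_lv)\big)+z'_l\big(\sigma_-(z'_ku)*_Bv\big)+(z'_{k+l}-z'_{k+l-1})(u*_Bv)$. Type $\widetilde{\mathrm{IV}}$: let $C$ be the free algebra on letters $z'_k$ ($k\ge0$) with stuffle $*_C$ given by $[z'_k,z'_l]=z'_{k+l}$. Let $\mathfrak{A}^1_{\widetilde{\mathrm{IV}}}:=\mathbb{Q}\mathbf{1}\oplus\theta C\oplus\bigoplus_{k\ge1}z_kC$ (with new first-position symbols $\theta,z_k$). Put $\sigma_+(z_nw):=z'_nw+z'_{n-1}w\in C$. Define $*_{\widetilde{\mathrm{IV}}}$ bilinearly with unit $\mathbf{1}$ and, for $k,l\ge1$ and words $u,v\in C$: $z_ku*z_lv=z_k\big(u*_C\sigma_+(z_lv)\big)+z_l\big(\sigma_+(z_ku)*_Cv\big)+(z_{k+l}+z_{k+l-1})(u*_Cv)$; $z_ku*\theta v=\theta v*z_ku=z_k\big(u*_Cz'_1v\big)+\theta\big(\sigma_+(z_ku)*_Cv\big)+z_{k+1}(u*_Cv)$; $\theta u*\theta v=\theta\big(u*_Cz'_1v\big)+\theta\big(z'_1u*_Cv\big)+(z_2-\theta)(u*_Cv)$. *)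

theory Defs
  imports Complex_Main
begin

text \<open>A Q-linear combination of basis elements of type 'b is a function 'b => rat;
  elements of the algebra are those with finite support (contained in the set of
  admissible basis elements).\<close>

definition supp :: "('b \<Rightarrow> rat) \<Rightarrow> 'b set" where
  "supp f = {x. f x \<noteq> 0}"

definition elt :: "'b set \<Rightarrow> ('b \<Rightarrow> rat) \<Rightarrow> bool" where
  "elt V f \<longleftrightarrow> finite (supp f) \<and> supp f \<subseteq> V"

definition delta :: "'b \<Rightarrow> 'b \<Rightarrow> rat" where
  "delta a = (\<lambda>x. if x = a then 1 else 0)"

definition ladd :: "('b \<Rightarrow> rat) \<Rightarrow> ('b \<Rightarrow> rat) \<Rightarrow> 'b \<Rightarrow> rat" where
  "ladd f g = (\<lambda>x. f x + g x)"

definition lsub :: "('b \<Rightarrow> rat) \<Rightarrow> ('b \<Rightarrow> rat) \<Rightarrow> 'b \<Rightarrow> rat" where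
  "lsub f g = (\<lambda>x. f x - g x)"

definition lext :: "('a \<Rightarrow> 'b \<Rightarrow> rat) \<Rightarrow> ('a \<Rightarrow> rat) \<Rightarrow> 'b \<Rightarrow> rat" where
  "lext T f = (\<lambda>y. \<Sum>x\<in>supp f. f x * T x y)"

definition bext :: "('a \<Rightarrow> 'b \<Rightarrow> 'c \<Rightarrow> rat) \<Rightarrow> ('a \<Rightarrow> rat) \<Rightarrow> ('b \<Rightarrow> rat) \<Rightarrow> 'c \<Rightarrow> rat" where
  "bext M f g = (\<lambda>z. \<Sum>x\<in>supp f. \<Sum>y\<in>supp g. f x * g y * M x y z)"

text \<open>Left concatenation by a letter, extended linearly: a (sum c_w w) = sum c_w (a w).\<close>
definition pre :: "'a \<Rightarrow> ('a list \<Rightarrow> rat) \<Rightarrow> 'a list \<Rightarrow> rat" where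
  "pre a f = (\<lambda>w. case w of [] \<Rightarrow> 0 | x # w' \<Rightarrow> if x = a then f w' else 0)"

text \<open>br a b is the linear combination of letters [a,b].\<close>
fun stuffle :: "('a \<Rightarrow> 'a \<Rightarrow> 'a \<Rightarrow> rat) \<Rightarrow> 'a list \<Rightarrow> 'a list \<Rightarrow> 'a list \<Rightarrow> rat" where
  "stuffle br [] v = delta v"
| "stuffle br (a # u) [] = delta (a # u)"
| "stuffle br (a # u) (b # v) =
     ladd (ladd (pre a (stuffle br u (b # v))) (pre b (stuffle br (a # u) v)))
          (let s = stuffle br u v in lext (\<lambda>c. pre c s) (br a b))"

definition comm_on :: "'b set \<Rightarrow> (('b \<Rightarrow> rat) \<Rightarrow> ('b \<Rightarrow> rat) \<Rightarrow> 'b \<Rightarrow> rat) \<Rightarrow> bool" where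
  "comm_on V m \<longleftrightarrow> (\<forall>f g. elt V f \<and> elt V g \<longrightarrow> m f g = m g f)"

definition assoc_on :: "'b set \<Rightarrow> (('b \<Rightarrow> rat) \<Rightarrow> ('b \<Rightarrow> rat) \<Rightarrow> 'b \<Rightarrow> rat) \<Rightarrow> bool" where
  "assoc_on V m \<longleftrightarrow> (\<forall>f g h. elt V f \<and> elt V g \<and> elt V h \<longrightarrow> m (m f g) h = m f (m g h))"

datatype letI = Th | Zl nat

fun brI :: "letI \<Rightarrow> letI \<Rightarrow> letI \<Rightarrow> rat" where
  "brI (Zl k) (Zl l) = ladd (delta (Zl (k + l))) (delta (Zl (k + l - 1)))"
| "brI Th (Zl k) = delta (Zl (k + 1))"
| "brI (Zl k) Th = delta (Zl (k + 1))"
| "brI Th Th = lsub (delta (Zl 2)) (delta Th)"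

definition WI :: "letI list set" where
  "WI = {w. \<forall>a\<in>set w. a = Th \<or> (\<exists>k\<ge>1. a = Zl k)}"

definition mulI :: "(letI list \<Rightarrow> rat) \<Rightarrow> (letI list \<Rightarrow> rat) \<Rightarrow> letI list \<Rightarrow> rat" where
  "mulI = bext (stuffle brI)"

text \<open>Letter z'_k (k >= 0) is represented by the natural number k.\<close>
definition brII :: "nat \<Rightarrow> nat \<Rightarrow> nat \<Rightarrow> rat" where
  "brII k l = delta (k + l)"

definition mulII :: "(nat list \<Rightarrow> rat) \<Rightarrow> (nat list \<Rightarrow> rat) \<Rightarrow> nat list \<Rightarrow> rat" where
  "mulII = bext (stuffle brII)"

text \<open>B: letters z_k (k in Z) represented by integers.\<close>
definition brB :: "int \<Rightarrow> int \<Rightarrow> int \<Rightarrow> rat" where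
  "brB k l = delta (k + l)"

abbreviation stB :: "int list \<Rightarrow> int list \<Rightarrow> int list \<Rightarrow> rat" where
  "stB \<equiv> stuffle brB"

text \<open>The symbol z'_k w is represented by the pair (k, w).\<close>
definition sigma_minus :: "int \<Rightarrow> int list \<Rightarrow> int list \<Rightarrow> rat" where
  "sigma_minus n w = lsub (delta (n # w)) (delta ((n - 1) # w))"

definition pz :: "int \<Rightarrow> (int list \<Rightarrow> rat) \<Rightarrow> int \<times> int list \<Rightarrow> rat" where
  "pz k F = (\<lambda>(j, w). if j = k then F w else 0)"

fun mIII :: "int \<times> int list \<Rightarrow> int \<times> int list \<Rightarrow> int \<times> int list \<Rightarrow> rat" where
  "mIII (k, u) (l, v) =
     ladd (ladd (pz k (bext stB (delta u) (sigma_minus l v)))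
                (pz l (bext stB (sigma_minus k u) (delta v))))
          (lsub (pz (k + l) (stB u v)) (pz (k + l - 1) (stB u v)))"

definition mulIII :: "(int \<times> int list \<Rightarrow> rat) \<Rightarrow> (int \<times> int list \<Rightarrow> rat) \<Rightarrow> int \<times> int list \<Rightarrow> rat" where
  "mulIII = bext mIII"

text \<open>C: letters z'_k (k >= 0) represented by naturals, with stuffle stC = stuffle brII.
  Basis of A^1_IV: One (the unit 1), ThW w (= theta w), ZW k w (= z_k w, k >= 1), w a word in C.\<close>
datatype bIV = One | ThW "nat list" | ZW nat "nat list"

abbreviation stC :: "nat list \<Rightarrow> nat list \<Rightarrow> nat list \<Rightarrow> rat" where
  "stC \<equiv> stuffle brII"

definition VIV :: "bIV set" where
  "VIV = {One} \<union> range ThW \<union> {ZW k w | k w. k \<ge> 1}"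

definition sigma_plus :: "nat \<Rightarrow> nat list \<Rightarrow> nat list \<Rightarrow> rat" where
  "sigma_plus n w = ladd (delta (n # w)) (delta ((n - 1) # w))"

definition pT :: "(nat list \<Rightarrow> rat) \<Rightarrow> bIV \<Rightarrow> rat" where
  "pT F = (\<lambda>x. case x of ThW w \<Rightarrow> F w | _ \<Rightarrow> 0)"

definition pZ :: "nat \<Rightarrow> (nat list \<Rightarrow> rat) \<Rightarrow> bIV \<Rightarrow> rat" where
  "pZ k F = (\<lambda>x. case x of ZW j w \<Rightarrow> (if j = k then F w else 0) | _ \<Rightarrow> 0)"

fun mIV :: "bIV \<Rightarrow> bIV \<Rightarrow> bIV \<Rightarrow> rat" where
  "mIV One y = delta y"
| "mIV x One = delta x"
| "mIV (ZW k u) (ZW l v) =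
     ladd (ladd (pZ k (bext stC (delta u) (sigma_plus l v)))
                (pZ l (bext stC (sigma_plus k u) (delta v))))
          (ladd (pZ (k + l) (stC u v)) (pZ (k + l - 1) (stC u v)))"
| "mIV (ZW k u) (ThW v) =
     ladd (ladd (pZ k (stC u (1 # v))) (pT (bext stC (sigma_plus k u) (delta v))))
          (pZ (k + 1) (stC u v))"
| "mIV (ThW v) (ZW k u) =
     ladd (ladd (pZ k (stC u (1 # v))) (pT (bext stC (sigma_plus k u) (delta v))))
          (pZ (k + 1) (stC u v))"
| "mIV (ThW u) (ThW v) =
     ladd (ladd (pT (stC u (1 # v))) (pT (stC (1 # u) v)))
          (lsub (pZ 2 (stC u v)) (pT (stC u v)))"

definition mulIV :: "(bIV \<Rightarrow> rat) \<Rightarrow> (bIV \<Rightarrow> rat) \<Rightarrow> bIV \<Rightarrow> rat" where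
  "mulIV = bext mIV"

end

theory Submission
  imports Defs "HOL-Library.Function_Algebras"
begin

text \<open>
  A stuffle whose bracket on letters is commutative and associative is itself commutative and
  associative. For associativity one shows
  the cyclic identity \<open>(x * y) * z = (y * z) * x\<close> on words by induction on the total length: expanding
  both sides with the recursion on the first letters of \<open>x\<close>, \<open>y\<close>, \<open>z\<close> produces seven terms each,
  which match by the induction hypothesis and the commutativity and associativity of the bracket.
  Types \<open>\<widetilde>I\<close> and II are stuffles of this kind. For types III and \<open>\<widetilde>IV\<close> the maps \<open>\<sigma>\<^sub>-\<close> and
  \<open>\<sigma>\<^sub>+\<close> (the latter extended by \<open>\<theta>w \<mapsto> z'\<^sub>1w\<close> and \<open>1 \<mapsto> 1\<close>) are injective and multiplicative into
  the stuffle algebras \<open>B\<close> and \<open>C\<close>, so associativity is pulled back from there; commutativity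
  is visible from the symmetric defining formulas.
\<close>

abbreviation finsupp :: "('b \<Rightarrow> rat) \<Rightarrow> bool" where
  "finsupp f \<equiv> finite (supp f)"

section \<open>Finitely supported linear combinations\<close>

lemma ladd_eq_plus [simp]: "ladd f g = f + g"
  by (simp add: ladd_def fun_eq_iff)

lemma lsub_eq_minus [simp]: "lsub f g = f - g"
  by (simp add: lsub_def fun_eq_iff)

lemma supp_delta [simp]: "supp (delta a) = {a}"
  by (auto simp: supp_def delta_def)

lemma supp_add_subset: "supp (f + g) \<subseteq> supp f \<union> supp g"
  by (auto simp: supp_def)

lemma supp_diff_subset: "supp (f - g) \<subseteq> supp f \<union> supp g"
  by (auto simp: supp_def)

lemma supp_add_subsetI: "supp f \<subseteq> V \<Longrightarrow> supp g \<subseteq> V \<Longrightarrow> supp (f + g) \<subseteq> V"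
  by (rule subset_trans[OF supp_add_subset], rule Un_least)

lemma supp_diff_subsetI: "supp f \<subseteq> V \<Longrightarrow> supp g \<subseteq> V \<Longrightarrow> supp (f - g) \<subseteq> V"
  by (rule subset_trans[OF supp_diff_subset], rule Un_least)

lemma finsupp_add [simp]: "finsupp f \<Longrightarrow> finsupp g \<Longrightarrow> finsupp (f + g)"
  by (meson finite_UnI finite_subset supp_add_subset)

lemma finsupp_diff [simp]: "finsupp f \<Longrightarrow> finsupp g \<Longrightarrow> finsupp (f - g)"
  by (meson finite_UnI finite_subset supp_diff_subset)

lemma lext_eq_sum_superset:
  "finite A \<Longrightarrow> supp f \<subseteq> A \<Longrightarrow> lext K f y = (\<Sum>x\<in>A. f x * K x y)"
  unfolding lext_def by (rule sum.mono_neutral_left) (auto simp: supp_def)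

lemma lext_delta [simp]: "lext K (delta x) = K x"
  by (rule ext) (simp add: lext_def, simp add: delta_def)

lemma lext_add: "finsupp f \<Longrightarrow> finsupp g \<Longrightarrow> lext K (f + g) = lext K f + lext K g"
proof (rule ext)
  fix y assume "finsupp f" "finsupp g"
  then have A: "finite (supp f \<union> supp g)" by simp
  show "lext K (f + g) y = (lext K f + lext K g) y"
    using supp_add_subset[of f g]
    by (simp add: lext_eq_sum_superset[OF A] sum.distrib distrib_right)
qed

lemma lext_diff: "finsupp f \<Longrightarrow> finsupp g \<Longrightarrow> lext K (f - g) = lext K f - lext K g"
proof (rule ext)
  fix y assume "finsupp f" "finsupp g"
  then have A: "finite (supp f \<union> supp g)" by simp
  show "lext K (f - g) y = (lext K f - lext K g) y"
    using supp_diff_subset[of f g]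
    by (simp add: lext_eq_sum_superset[OF A] sum_subtractf left_diff_distrib)
qed

lemma lext_kernel_add: "lext (\<lambda>x. K1 x + K2 x) f = lext K1 f + lext K2 f"
  by (simp add: lext_def fun_eq_iff sum.distrib distrib_left)

lemma lext_kernel_diff: "lext (\<lambda>x. K1 x - K2 x) f = lext K1 f - lext K2 f"
  by (simp add: lext_def fun_eq_iff sum_subtractf right_diff_distrib)

lemma lext_cong: "(\<And>x. x \<in> supp f \<Longrightarrow> K1 x = K2 x) \<Longrightarrow> lext K1 f = lext K2 f"
  by (simp add: lext_def fun_eq_iff)

lemma lext_delta_kernel: "finsupp f \<Longrightarrow> lext delta f = f"
proof (rule ext)
  fix y assume "finsupp f"
  then have A: "finite (insert y (supp f))" by simp
  have "lext delta f y = (\<Sum>x\<in>insert y (supp f). f x * delta x y)"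
    by (rule lext_eq_sum_superset[OF A]) auto
  also have "\<dots> = (\<Sum>x\<in>insert y (supp f). if x = y then f x else 0)"
    by (rule sum.cong) (auto simp: delta_def)
  also have "\<dots> = f y" using A by (simp add: sum.delta')
  finally show "lext delta f y = f y" .
qed

lemma supp_lext_subset: "supp (lext K f) \<subseteq> (\<Union>x\<in>supp f. supp (K x))"
proof
  fix y assume "y \<in> supp (lext K f)"
  then have "(\<Sum>x\<in>supp f. f x * K x y) \<noteq> 0" by (simp add: supp_def lext_def)
  then obtain x where "x \<in> supp f" "f x * K x y \<noteq> 0" by (rule sum.not_neutral_contains_not_neutral)
  then show "y \<in> (\<Union>x\<in>supp f. supp (K x))" by (auto simp: supp_def)
qed

lemma finsupp_lext: "finsupp f \<Longrightarrow> (\<And>x. x \<in> supp f \<Longrightarrow> finsupp (K x)) \<Longrightarrow> finsupp (lext K f)"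
  by (rule finite_subset[OF supp_lext_subset]) auto

lemma lext_swap: "lext (\<lambda>z. lext (\<lambda>x. K x z) f) h = lext (\<lambda>x. lext (K x) h) f"
  unfolding lext_def fun_eq_iff
  by (simp add: sum_distrib_left mult_ac, subst sum.swap, simp)

lemma lext_lext:
  assumes f: "finsupp f" and K: "\<And>x. x \<in> supp f \<Longrightarrow> finsupp (K1 x)"
  shows "lext K2 (lext K1 f) = lext (\<lambda>x. lext K2 (K1 x)) f"
proof (rule ext)
  fix y
  let ?B = "\<Union>x\<in>supp f. supp (K1 x)"
  have B: "finite ?B" using f K by auto
  have "lext K2 (lext K1 f) y = (\<Sum>z\<in>?B. lext K1 f z * K2 z y)"
    by (rule lext_eq_sum_superset[OF B supp_lext_subset])
  also have "\<dots> = (\<Sum>z\<in>?B. \<Sum>x\<in>supp f. f x * K1 x z * K2 z y)"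
    by (simp add: lext_def sum_distrib_right)
  also have "\<dots> = (\<Sum>x\<in>supp f. \<Sum>z\<in>?B. f x * K1 x z * K2 z y)"
    by (rule sum.swap)
  also have "\<dots> = (\<Sum>x\<in>supp f. f x * lext K2 (K1 x) y)"
  proof (rule sum.cong[OF refl])
    fix x assume "x \<in> supp f"
    then have "lext K2 (K1 x) y = (\<Sum>z\<in>?B. K1 x z * K2 z y)"
      by (intro lext_eq_sum_superset[OF B]) auto
    then show "(\<Sum>z\<in>?B. f x * K1 x z * K2 z y) = f x * lext K2 (K1 x) y"
      by (simp add: sum_distrib_left mult_ac)
  qed
  finally show "lext K2 (lext K1 f) y = lext (\<lambda>x. lext K2 (K1 x)) f y"
    by (simp add: lext_def)
qed

lemma inj_on_lext:
  assumes "\<And>F. elt V F \<Longrightarrow> lext K F = 0 \<Longrightarrow> F = 0"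
  shows "inj_on (lext K) {F. elt V F}"
proof (rule inj_onI)
  fix F G assume "F \<in> {F. elt V F}" "G \<in> {F. elt V F}" and eq: "lext K F = lext K G"
  then have "elt V (F - G)" by (simp add: elt_def supp_diff_subsetI)
  moreover have "lext K (F - G) = 0" using \<open>F \<in> _\<close> \<open>G \<in> _\<close> eq by (simp add: elt_def lext_diff)
  ultimately show "F = G" using assms by fastforce
qed

lemma finsupp_zero_at_chain_start:
  assumes "finsupp F" "inj g" "\<And>j. F (g j) \<noteq> 0 \<Longrightarrow> F (g (Suc j)) \<noteq> 0"
  shows "F (g 0) = 0"
proof (rule ccontr)
  assume "F (g 0) \<noteq> 0"
  then have "F (g j) \<noteq> 0" for j by (induction j) (use assms(3) in auto)
  then have "range g \<subseteq> supp F" by (auto simp: supp_def)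
  then show False using assms(1,2) finite_subset infinite_UNIV_nat finite_imageD by metis
qed

lemma pre_lext: "pre a (lext K f) = lext (\<lambda>x. pre a (K x)) f"
  by (auto simp: pre_def lext_def fun_eq_iff split: list.split)

lemma pre_add [simp]: "pre a (f + g) = pre a f + pre a g"
  by (auto simp: pre_def fun_eq_iff split: list.split)

lemma pre_diff [simp]: "pre a (f - g) = pre a f - pre a g"
  by (auto simp: pre_def fun_eq_iff split: list.split)

lemma pre_delta [simp]: "pre a (delta w) = delta (a # w)"
  by (auto simp: pre_def delta_def fun_eq_iff split: list.split)

lemma supp_pre_subset: "supp (pre a F) \<subseteq> (#) a ` supp F"
proof
  fix y assume "y \<in> supp (pre a F)"
  then obtain w where "y = a # w" "F w \<noteq> 0"
    by (cases y) (auto simp: supp_def pre_def split: if_splits)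
  then show "y \<in> (#) a ` supp F" by (auto simp: supp_def)
qed

lemma finsupp_pre [simp]: "finsupp F \<Longrightarrow> finsupp (pre a F)"
  by (meson finite_imageI finite_subset supp_pre_subset)

lemma pre_eq_lext: "finsupp F \<Longrightarrow> pre a F = lext (\<lambda>w. delta (a # w)) F"
  using pre_lext[of a delta F] by (simp add: lext_delta_kernel)

lemma bext_eq_lext: "bext M f g = lext (\<lambda>x. lext (M x) g) f"
  by (simp add: bext_def lext_def fun_eq_iff sum_distrib_left mult_ac)

lemma bext_commute:
  assumes "\<And>x y. x \<in> supp f \<Longrightarrow> y \<in> supp g \<Longrightarrow> M x y = M y x"
  shows "bext M f g = bext M g f"
proof -
  have "bext M f g = (\<lambda>z. \<Sum>x\<in>supp f. \<Sum>y\<in>supp g. g y * f x * M y x z)"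
    unfolding bext_def using assms by (intro ext sum.cong refl) (metis mult.commute)
  also have "\<dots> = bext M g f"
    unfolding bext_def by (rule ext, rule sum.swap)
  finally show ?thesis .
qed

lemma bext_delta_delta [simp]: "bext M (delta x) (delta y) = M x y"
  by (simp add: bext_eq_lext)

lemma bext_delta_right: "bext M F (delta z) = lext (\<lambda>p. M p z) F"
  by (simp add: bext_eq_lext)

lemma bext_delta_left: "bext M (delta x) G = lext (M x) G"
  by (simp add: bext_eq_lext)

lemma bext_add_left: "finsupp f1 \<Longrightarrow> finsupp f2 \<Longrightarrow> bext M (f1 + f2) g = bext M f1 g + bext M f2 g"
  by (simp add: bext_eq_lext lext_add)

lemma bext_diff_left: "finsupp f1 \<Longrightarrow> finsupp f2 \<Longrightarrow> bext M (f1 - f2) g = bext M f1 g - bext M f2 g"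
  by (simp add: bext_eq_lext lext_diff)

lemma bext_add_right: "finsupp g1 \<Longrightarrow> finsupp g2 \<Longrightarrow> bext M f (g1 + g2) = bext M f g1 + bext M f g2"
  by (simp add: bext_eq_lext lext_add lext_kernel_add)

lemma bext_diff_right: "finsupp g1 \<Longrightarrow> finsupp g2 \<Longrightarrow> bext M f (g1 - g2) = bext M f g1 - bext M f g2"
  by (simp add: bext_eq_lext lext_diff lext_kernel_diff)

lemma supp_bext_subset: "supp (bext M f g) \<subseteq> (\<Union>x\<in>supp f. \<Union>y\<in>supp g. supp (M x y))"
  unfolding bext_eq_lext using supp_lext_subset[of "M _" g] by (fastforce dest: subsetD[OF supp_lext_subset])

lemma finsupp_bext:
  "finsupp f \<Longrightarrow> finsupp g \<Longrightarrow> (\<And>x y. x \<in> supp f \<Longrightarrow> y \<in> supp g \<Longrightarrow> finsupp (M x y))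
    \<Longrightarrow> finsupp (bext M f g)"
  by (rule finite_subset[OF supp_bext_subset]) auto

lemma bext_lext_left:
  "finsupp f \<Longrightarrow> (\<And>p. p \<in> supp f \<Longrightarrow> finsupp (J p))
    \<Longrightarrow> bext M (lext J f) g = lext (\<lambda>p. bext M (J p) g) f"
  unfolding bext_eq_lext by (rule lext_lext)

lemma bext_lext_right:
  assumes "finsupp g" "\<And>q. q \<in> supp g \<Longrightarrow> finsupp (J q)"
  shows "bext M f (lext J g) = lext (\<lambda>q. bext M f (J q)) g"
proof -
  have "bext M f (lext J g) = lext (\<lambda>x. lext (\<lambda>q. lext (M x) (J q)) g) f"
    unfolding bext_eq_lext by (rule lext_cong) (rule lext_lext[OF assms])
  also have "\<dots> = lext (\<lambda>q. lext (\<lambda>x. lext (M x) (J q)) f) g"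
    by (rule lext_swap[symmetric])
  finally show ?thesis by (simp add: bext_eq_lext)
qed

section \<open>Commutativity and associativity of bilinear extensions\<close>

lemma comm_on_bext:
  "(\<And>x y. x \<in> V \<Longrightarrow> y \<in> V \<Longrightarrow> M x y = M y x) \<Longrightarrow> comm_on V (bext M)"
  unfolding comm_on_def elt_def by (intro allI impI bext_commute) blast

lemma assoc_on_bext:
  assumes fin: "\<And>x y. x \<in> V \<Longrightarrow> y \<in> V \<Longrightarrow> finsupp (M x y)"
    and assoc: "\<And>x y z. x \<in> V \<Longrightarrow> y \<in> V \<Longrightarrow> z \<in> V \<Longrightarrow>
                  lext (\<lambda>p. M p z) (M x y) = lext (M x) (M y z)"
  shows "assoc_on V (bext M)"
  unfolding assoc_on_def
proof (intro allI impI)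
  fix f g h assume "elt V f \<and> elt V g \<and> elt V h"
  then have f: "finsupp f" "supp f \<subseteq> V" and g: "finsupp g" "supp g \<subseteq> V"
    and h: "finsupp h" "supp h \<subseteq> V"
    by (auto simp: elt_def)
  have fin_lext: "finsupp (lext (M x) k)" if "x \<in> V" "finsupp k" "supp k \<subseteq> V" for x k
    using that fin by (intro finsupp_lext) auto
  have "bext M (bext M f g) h = lext (\<lambda>x. lext (\<lambda>p. lext (M p) h) (lext (M x) g)) f"
    unfolding bext_eq_lext using f g fin_lext by (intro lext_lext) auto
  also have "\<dots> = lext (\<lambda>x. lext (\<lambda>y. lext (\<lambda>z. lext (\<lambda>p. M p z) (M x y)) h) g) f"
  proof (rule lext_cong)
    fix x assume "x \<in> supp f"
    then have "lext (\<lambda>p. lext (M p) h) (lext (M x) g) = lext (\<lambda>y. lext (\<lambda>p. lext (M p) h) (M x y)) g"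
      using f g fin by (intro lext_lext) auto
    also have "\<dots> = lext (\<lambda>y. lext (\<lambda>z. lext (\<lambda>p. M p z) (M x y)) h) g"
      by (rule lext_cong) (rule lext_swap[symmetric])
    finally show "lext (\<lambda>p. lext (M p) h) (lext (M x) g) = \<dots>" .
  qed
  also have "\<dots> = lext (\<lambda>x. lext (\<lambda>y. lext (\<lambda>z. lext (M x) (M y z)) h) g) f"
    using f g h assoc by (intro lext_cong) blast
  also have "\<dots> = lext (\<lambda>x. lext (M x) (lext (\<lambda>y. lext (M y) h) g)) f"
  proof (rule lext_cong)
    fix x assume "x \<in> supp f"
    have "lext (M x) (lext (\<lambda>y. lext (M y) h) g) = lext (\<lambda>y. lext (M x) (lext (M y) h)) g"
      using g h fin_lext by (intro lext_lext) auto
    also have "\<dots> = lext (\<lambda>y. lext (\<lambda>z. lext (M x) (M y z)) h) g"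
      using g h fin by (intro lext_cong lext_lext) auto
    finally show "lext (\<lambda>y. lext (\<lambda>z. lext (M x) (M y z)) h) g
        = lext (M x) (lext (\<lambda>y. lext (M y) h) g)" by simp
  qed
  also have "\<dots> = bext M f (bext M g h)"
    by (simp add: bext_eq_lext)
  finally show "bext M (bext M f g) h = bext M f (bext M g h)" .
qed

lemma lext_bext_hom:
  assumes f: "elt V f" and g: "elt V g"
    and fin: "\<And>x y. x \<in> V \<Longrightarrow> y \<in> V \<Longrightarrow> finsupp (M x y)"
    and fin_K: "\<And>x. x \<in> V \<Longrightarrow> finsupp (K x)"
    and hom: "\<And>x y. x \<in> V \<Longrightarrow> y \<in> V \<Longrightarrow> lext K (M x y) = bext M' (K x) (K y)"
  shows "lext K (bext M f g) = bext M' (lext K f) (lext K g)"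
proof -
  from f g have f: "finsupp f" "supp f \<subseteq> V" and g: "finsupp g" "supp g \<subseteq> V"
    by (auto simp: elt_def)
  have "lext K (bext M f g) = lext (\<lambda>p. lext K (lext (M p) g)) f"
    unfolding bext_eq_lext using f g fin by (intro lext_lext finsupp_lext) auto
  also have "\<dots> = lext (\<lambda>p. lext (\<lambda>q. bext M' (K p) (K q)) g) f"
  proof (rule lext_cong)
    fix p assume p: "p \<in> supp f"
    have "lext K (lext (M p) g) = lext (\<lambda>q. lext K (M p q)) g"
      by (rule lext_lext[OF g(1)]) (use p f g fin in auto)
    also have "\<dots> = lext (\<lambda>q. bext M' (K p) (K q)) g"
      by (rule lext_cong) (use p f g hom in auto)
    finally show "lext K (lext (M p) g) = lext (\<lambda>q. bext M' (K p) (K q)) g" .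
  qed
  also have "\<dots> = lext (\<lambda>p. bext M' (K p) (lext K g)) f"
    using g fin_K by (intro lext_cong bext_lext_right[symmetric]) auto
  also have "\<dots> = bext M' (lext K f) (lext K g)"
    using f fin_K by (intro bext_lext_left[symmetric]) auto
  finally show ?thesis .
qed

lemma assoc_on_bext_pullback:
  assumes fin: "\<And>x y. x \<in> V \<Longrightarrow> y \<in> V \<Longrightarrow> finsupp (M x y)"
    and closed: "\<And>x y. x \<in> V \<Longrightarrow> y \<in> V \<Longrightarrow> supp (M x y) \<subseteq> V"
    and fin_K: "\<And>x. x \<in> V \<Longrightarrow> finsupp (K x)"
    and hom: "\<And>x y. x \<in> V \<Longrightarrow> y \<in> V \<Longrightarrow> lext K (M x y) = bext M' (K x) (K y)"
    and assoc': "assoc_on UNIV (bext M')"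
    and inj: "inj_on (lext K) {F. elt V F}"
  shows "assoc_on V (bext M)"
proof (rule assoc_on_bext[OF fin])
  fix x y z assume V: "x \<in> V" "y \<in> V" "z \<in> V"
  have elt_bext: "elt V (bext M F G)" if "elt V F" "elt V G" for F G
  proof -
    have "finsupp (bext M F G)" using that fin by (intro finsupp_bext) (auto simp: elt_def)
    moreover have "supp (bext M F G) \<subseteq> V"
      using that closed by (auto simp: elt_def dest!: subsetD[OF supp_bext_subset])
    ultimately show ?thesis by (simp add: elt_def)
  qed
  have elt_M: "elt V (M p q)" if "p \<in> V" "q \<in> V" for p q
    using that fin closed by (simp add: elt_def)
  have elt_delta: "elt V (delta p)" if "p \<in> V" for p
    using that by (simp add: elt_def)
  have elt_K: "elt UNIV (K p)" if "p \<in> V" for p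
    using that fin_K by (simp add: elt_def)
  have hom_bext: "lext K (bext M F G) = bext M' (lext K F) (lext K G)" if "elt V F" "elt V G" for F G
    by (rule lext_bext_hom[OF that fin fin_K hom])
  let ?A = "bext M (M x y) (delta z)" and ?B = "bext M (delta x) (M y z)"
  have "lext K ?A = bext M' (bext M' (K x) (K y)) (K z)"
    using V by (simp only: hom_bext elt_M elt_delta hom lext_delta)
  also have "\<dots> = bext M' (K x) (bext M' (K y) (K z))"
    using assoc' V elt_K by (simp add: assoc_on_def)
  also have "\<dots> = lext K ?B"
    using V by (simp only: hom_bext elt_M elt_delta hom lext_delta)
  finally have "?A = ?B"
    using V by (intro inj_onD[OF inj]) (simp_all add: elt_bext elt_M elt_delta)
  then show "lext (\<lambda>p. M p z) (M x y) = lext (M x) (M y z)"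
    by (simp only: bext_delta_right bext_delta_left)
qed

section \<open>Stuffle algebras\<close>

definition lpre :: "('a \<Rightarrow> rat) \<Rightarrow> ('a list \<Rightarrow> rat) \<Rightarrow> 'a list \<Rightarrow> rat" where
  "lpre \<alpha> Y = lext (\<lambda>c. pre c Y) \<alpha>"

lemma lpre_lext: "lpre \<alpha> (lext K f) = lext (\<lambda>x. lpre \<alpha> (K x)) f"
  unfolding lpre_def pre_lext by (rule lext_swap)

lemma lpre_delta [simp]: "lpre (delta c) Y = pre c Y"
  by (simp add: lpre_def)

lemma finsupp_lpre [simp]: "finsupp \<alpha> \<Longrightarrow> finsupp Y \<Longrightarrow> finsupp (lpre \<alpha> Y)"
  unfolding lpre_def by (rule finsupp_lext) auto

lemma lpre_lext_left:
  "finsupp \<alpha> \<Longrightarrow> (\<And>d. finsupp (K d)) \<Longrightarrow> lpre (lext K \<alpha>) Y = lext (\<lambda>d. lpre (K d) Y) \<alpha>"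
  unfolding lpre_def by (rule lext_lext) auto

lemma lpre_eq_lext:
  "finsupp X \<Longrightarrow> lpre \<alpha> X = lext (\<lambda>x. lext (\<lambda>d. delta (d # x)) \<alpha>) X"
  using lpre_lext[of \<alpha> delta X] by (simp add: lext_delta_kernel lpre_def)

lemma list_pair_induct:
  assumes "\<And>v. P [] v" "\<And>a u. P (a # u) []"
    and "\<And>a u b v. P u (b # v) \<Longrightarrow> P (a # u) v \<Longrightarrow> P u v \<Longrightarrow> P (a # u) (b # v)"
  shows "P u v"
proof (induction u arbitrary: v)
  case Nil
  show ?case by (rule assms(1))
next
  case (Cons a u)
  show ?case by (induction v) (use assms(2,3) Cons.IH in blast)+
qed

declare stuffle.simps(3) [simp del]

locale stuffle_algebra =
  fixes br :: "'a \<Rightarrow> 'a \<Rightarrow> 'a \<Rightarrow> rat" and L :: "'a set"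
  assumes br_commute: "br a b = br b a"
    and finsupp_br: "finsupp (br a b)"
    and br_assoc: "a \<in> L \<Longrightarrow> b \<in> L \<Longrightarrow> c \<in> L \<Longrightarrow>
        lext (\<lambda>d. br d c) (br a b) = lext (\<lambda>d. br a d) (br b c)"
begin

abbreviation S where "S \<equiv> stuffle br"

definition rmul :: "'a list \<Rightarrow> ('a list \<Rightarrow> rat) \<Rightarrow> 'a list \<Rightarrow> rat" where
  "rmul w F = lext (\<lambda>x. S x w) F"

lemma stuffle_Nil_right [simp]: "S u [] = delta u"
  by (cases u) auto

lemma stuffle_Cons_Cons:
  "S (a # u) (b # v) = pre a (S u (b # v)) + pre b (S (a # u) v) + lpre (br a b) (S u v)"
  by (simp add: lpre_def Let_def stuffle.simps(3))

lemma finsupp_stuffle [simp]: "finsupp (S u v)"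
proof (induction u v rule: list_pair_induct)
  case (3 a u b v)
  then show ?case
    by (simp only: stuffle_Cons_Cons) (intro finsupp_add finsupp_pre finsupp_lpre finsupp_br)
qed auto

lemma stuffle_commute: "S u v = S v u"
  by (induction u v rule: list_pair_induct) (simp_all add: stuffle_Cons_Cons br_commute add_ac)

lemma rmul_Nil: "finsupp F \<Longrightarrow> rmul [] F = F"
  by (simp add: rmul_def lext_delta_kernel)

lemma rmul_delta [simp]: "rmul w (delta x) = S x w"
  by (simp add: rmul_def)

lemma rmul_add: "finsupp F \<Longrightarrow> finsupp G \<Longrightarrow> rmul w (F + G) = rmul w F + rmul w G"
  by (simp add: rmul_def lext_add)

lemma rmul_lext:
  "finsupp f \<Longrightarrow> (\<And>x. finsupp (K x)) \<Longrightarrow> rmul w (lext K f) = lext (\<lambda>x. rmul w (K x)) f"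
  unfolding rmul_def by (rule lext_lext) auto

lemma rmul_Cons_pre:
  assumes X: "finsupp X"
  shows "rmul (c # w) (pre a X)
    = pre a (rmul (c # w) X) + pre c (rmul w (pre a X)) + lpre (br a c) (rmul w X)"
proof -
  have pre_X: "rmul w' (pre a X) = lext (\<lambda>x. S (a # x) w') X" for w'
    by (simp add: pre_eq_lext[OF X] rmul_lext[OF X])
  have "pre a (rmul (c # w) X) + pre c (rmul w (pre a X)) + lpre (br a c) (rmul w X)
      = lext (\<lambda>x. pre a (S x (c # w)) + pre c (S (a # x) w) + lpre (br a c) (S x w)) X"
    unfolding pre_X by (simp add: rmul_def pre_lext lpre_lext lext_kernel_add)
  also have "\<dots> = rmul (c # w) (pre a X)"
    unfolding pre_X by (simp add: stuffle_Cons_Cons)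
  finally show ?thesis by (rule sym)
qed

lemma rmul_lpre:
  assumes \<alpha>: "finsupp \<alpha>" and X: "finsupp X"
  shows "rmul w (lpre \<alpha> X) = lext (\<lambda>x. lext (\<lambda>d. S (d # x) w) \<alpha>) X"
  using \<alpha> by (simp add: lpre_eq_lext[OF X] rmul_lext[OF X] finsupp_lext rmul_lext)

lemma rmul_Cons_lpre:
  assumes \<alpha>: "finsupp \<alpha>" and X: "finsupp X"
  shows "rmul (c # w) (lpre \<alpha> X) = lpre \<alpha> (rmul (c # w) X) + pre c (rmul w (lpre \<alpha> X))
           + lpre (lext (\<lambda>d. br d c) \<alpha>) (rmul w X)"
proof -
  have "lpre \<alpha> (rmul (c # w) X) + pre c (rmul w (lpre \<alpha> X)) + lpre (lext (\<lambda>d. br d c) \<alpha>) (rmul w X)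
     = lext (\<lambda>x. lext (\<lambda>d. pre d (S x (c # w)) + pre c (S (d # x) w) + lpre (br d c) (S x w)) \<alpha>) X"
    by (simp add: rmul_def lpre_lext rmul_lpre[OF \<alpha> X, unfolded rmul_def] pre_lext
        lpre_lext_left[OF \<alpha>] finsupp_br lext_kernel_add) (simp add: lpre_def)
  also have "\<dots> = rmul (c # w) (lpre \<alpha> X)"
    unfolding rmul_lpre[OF \<alpha> X] by (simp add: stuffle_Cons_Cons)
  finally show ?thesis by (rule sym)
qed

lemma rmul_Cons_stuffle_Cons:
  "rmul (c # w) (S (a # u) (b # v)) =
     pre a (rmul (c # w) (S u (b # v))) + lpre (br a c) (rmul w (S u (b # v)))
   + pre b (rmul (c # w) (S (a # u) v)) + lpre (br b c) (rmul w (S (a # u) v))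
   + lpre (br a b) (rmul (c # w) (S u v)) + lpre (lext (\<lambda>d. br d c) (br a b)) (rmul w (S u v))
   + pre c (rmul w (S (a # u) (b # v)))"
proof -
  have expand: "rmul w' (S (a # u) (b # v))
      = rmul w' (pre a (S u (b # v))) + rmul w' (pre b (S (a # u) v)) + rmul w' (lpre (br a b) (S u v))"
    for w' by (simp add: stuffle_Cons_Cons rmul_add finsupp_br)
  show ?thesis
    unfolding expand rmul_Cons_pre[OF finsupp_stuffle] rmul_Cons_lpre[OF finsupp_br finsupp_stuffle]
    by (simp add: add_ac)
qed

lemma rmul_stuffle_cyclic:
  "set x \<subseteq> L \<Longrightarrow> set y \<subseteq> L \<Longrightarrow> set z \<subseteq> L \<Longrightarrow> rmul z (S x y) = rmul x (S y z)"
proof (induction "length x + length y + length z" arbitrary: x y z rule: less_induct)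
  case less
  show ?case
  proof (cases "x = [] \<or> y = [] \<or> z = []")
    case True
    then show ?thesis by (auto simp: rmul_Nil stuffle_commute)
  next
    case False
    then obtain a u b v c w where x: "x = a # u" and y: "y = b # v" and z: "z = c # w"
      by (auto simp: neq_Nil_conv)
    have L: "a \<in> L" "b \<in> L" "c \<in> L" "set u \<subseteq> L" "set v \<subseteq> L" "set w \<subseteq> L"
      using less.prems x y z by auto
    note IH = less.hyps[unfolded x y z]
    have "rmul (c # w) (S u (b # v)) = rmul u (S (b # v) (c # w))"
      "rmul w (S u (b # v)) = rmul u (S (b # v) w)"
      "rmul (c # w) (S (a # u) v) = rmul (a # u) (S v (c # w))"
      "rmul w (S (a # u) v) = rmul (a # u) (S v w)"
      "rmul (c # w) (S u v) = rmul u (S v (c # w))"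
      "rmul w (S u v) = rmul u (S v w)"
      "rmul w (S (a # u) (b # v)) = rmul (a # u) (S (b # v) w)"
      by (rule IH; use L in simp)+
    moreover have "lext (\<lambda>d. br d a) (br b c) = lext (\<lambda>d. br d c) (br a b)"
      using br_assoc[OF L(1-3)] by (simp add: br_commute)
    ultimately show ?thesis
      unfolding x y z rmul_Cons_stuffle_Cons[of c w a u b v] rmul_Cons_stuffle_Cons[of a u b v c w]
      by (simp add: br_commute[of c a] br_commute[of b a] add_ac)
  qed
qed

lemma stuffle_Nil_eq_delta: "S [] = delta"
  by (rule ext) simp

lemma finsupp_bext_stuffle [simp]: "finsupp f \<Longrightarrow> finsupp g \<Longrightarrow> finsupp (bext S f g)"
  by (rule finsupp_bext) auto

lemma comm_on_stuffle: "comm_on V (bext S)"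
  by (rule comm_on_bext) (rule stuffle_commute)

lemma assoc_on_stuffle: "assoc_on {w. set w \<subseteq> L} (bext S)"
proof (rule assoc_on_bext)
  fix x y z assume "x \<in> {w. set w \<subseteq> L}" "y \<in> {w. set w \<subseteq> L}" "z \<in> {w. set w \<subseteq> L}"
  then have "rmul z (S x y) = rmul x (S y z)" by (intro rmul_stuffle_cyclic) auto
  moreover have "lext (S x) (S y z) = lext (\<lambda>p. S p x) (S y z)"
    by (rule lext_cong) (rule stuffle_commute)
  ultimately show "lext (\<lambda>p. S p z) (S x y) = lext (S x) (S y z)"
    by (simp add: rmul_def)
qed simp

end

section \<open>Types \<open>\<widetilde>I\<close> and II\<close>

interpretation II: stuffle_algebra brII UNIV
  by unfold_locales (auto simp: brII_def add_ac)

lemma typeII: "comm_on UNIV mulII \<and> assoc_on UNIV mulII"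
  unfolding mulII_def using II.comm_on_stuffle II.assoc_on_stuffle by simp

definition lettersI :: "letI set" where
  "lettersI = insert Th (range (\<lambda>k. Zl (Suc k)))"

interpretation I: stuffle_algebra brI lettersI
proof
  fix a b c
  show "brI a b = brI b a" by (cases a; cases b) (auto simp: add.commute)
  show "finsupp (brI a b)" by (cases a; cases b) auto
  assume "a \<in> lettersI" "b \<in> lettersI" "c \<in> lettersI"
  then show "lext (\<lambda>d. brI d c) (brI a b) = lext (\<lambda>d. brI a d) (brI b c)"
    unfolding lettersI_def by (auto simp: lext_add lext_diff algebra_simps)
qed

lemma WI_eq: "WI = {w. set w \<subseteq> lettersI}"
  unfolding WI_def lettersI_def by (auto simp: Suc_le_eq gr0_conv_Suc)

lemma typeI: "comm_on WI mulI \<and> assoc_on WI mulI"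
  unfolding mulI_def WI_eq using I.comm_on_stuffle I.assoc_on_stuffle by blast

section \<open>Type III\<close>

interpretation B: stuffle_algebra brB UNIV
  by unfold_locales (auto simp: brB_def add_ac)

definition sigmaIII :: "int \<times> int list \<Rightarrow> int list \<Rightarrow> rat" where
  "sigmaIII = case_prod sigma_minus"

lemma sigma_minus_eq: "sigma_minus k = (\<lambda>w. delta (k # w) - delta ((k - 1) # w))"
  by (rule ext) (simp add: sigma_minus_def)

lemma sigmaIII_apply [simp]: "sigmaIII (k, w) = sigma_minus k w"
  by (simp add: sigmaIII_def)

lemma finsupp_sigmaIII [simp]: "finsupp (sigmaIII x)"
  by (cases x) (simp add: sigma_minus_eq)

lemma pz_lext: "pz k (lext K f) = lext (\<lambda>x. pz k (K x)) f"
  by (auto simp: pz_def lext_def fun_eq_iff)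

lemma pz_delta [simp]: "pz k (delta w) = delta (k, w)"
  by (auto simp: pz_def delta_def fun_eq_iff)

lemma pz_eq_lext: "finsupp F \<Longrightarrow> pz k F = lext (\<lambda>w. delta (k, w)) F"
  using pz_lext[of k delta F] by (simp add: lext_delta_kernel)

lemma finsupp_pz [simp]: "finsupp F \<Longrightarrow> finsupp (pz k F)"
  by (simp add: pz_eq_lext finsupp_lext)

lemma lext_sigmaIII_pz:
  assumes F: "finsupp F"
  shows "lext sigmaIII (pz k F) = pre k F - pre (k - 1) F"
proof -
  have "lext sigmaIII (pz k F) = lext (sigma_minus k) F"
    by (simp add: pz_eq_lext[OF F] lext_lext[OF F])
  also have "\<dots> = pre k F - pre (k - 1) F"
    unfolding sigma_minus_eq lext_kernel_diff pre_eq_lext[OF F] ..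
  finally show ?thesis .
qed

lemma sigmaIII_hom: "lext sigmaIII (mIII x y) = bext stB (sigmaIII x) (sigmaIII y)"
proof -
  obtain k u l v where xy: "x = (k, u)" "y = (l, v)" by fastforce
  have index_shift: "k + (l - 1) = k + l - 1" "k - 1 + l = k + l - 1" "k - 1 + (l - 1) = k + l - 1 - 1"
    by simp_all
  show ?thesis
    using index_shift unfolding xy
    by (simp add: lext_add lext_diff lext_sigmaIII_pz bext_diff_left bext_diff_right
        sigma_minus_def B.stuffle_Cons_Cons brB_def)
      (simp add: fun_eq_iff algebra_simps)
qed

lemma lext_delta_inj_apply:
  assumes "finsupp F" "inj g"
  shows "lext (\<lambda>x. delta (g x)) F (g x0) = F x0"
proof -
  have A: "finite (insert x0 (supp F))" using assms(1) by simp
  have "lext (\<lambda>x. delta (g x)) F (g x0) = (\<Sum>x\<in>insert x0 (supp F). F x * delta (g x) (g x0))"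
    by (rule lext_eq_sum_superset[OF A]) auto
  also have "\<dots> = (\<Sum>x\<in>insert x0 (supp F). if x = x0 then F x else 0)"
    by (rule sum.cong) (auto simp: delta_def inj_eq[OF assms(2)])
  also have "\<dots> = F x0" using A by (simp add: sum.delta')
  finally show ?thesis .
qed

lemma lext_sigmaIII_Cons:
  assumes "finsupp F"
  shows "lext sigmaIII F (n # w) = F (n, w) - F (n + 1, w)"
proof -
  let ?g1 = "\<lambda>x::int \<times> int list. fst x # snd x"
  let ?g2 = "\<lambda>x::int \<times> int list. (fst x - 1) # snd x"
  have inj: "inj ?g1" "inj ?g2"
    by (auto simp: inj_def prod_eq_iff)
  have sigmaIII_eq: "sigmaIII = (\<lambda>x. delta (?g1 x) - delta (?g2 x))"
    by (simp add: fun_eq_iff sigmaIII_def sigma_minus_def split: prod.split)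
  have "lext sigmaIII F = lext (\<lambda>x. delta (?g1 x)) F - lext (\<lambda>x. delta (?g2 x)) F"
    unfolding sigmaIII_eq by (rule lext_kernel_diff)
  then have "lext sigmaIII F (n # w)
      = lext (\<lambda>x. delta (?g1 x)) F (?g1 (n, w)) - lext (\<lambda>x. delta (?g2 x)) F (?g2 (n + 1, w))"
    by simp
  then show ?thesis
    by (simp only: lext_delta_inj_apply[OF assms inj(1)] lext_delta_inj_apply[OF assms inj(2)])
qed

lemma inj_on_lext_sigmaIII: "inj_on (lext sigmaIII) {F. elt UNIV F}"
proof (rule inj_on_lext)
  fix F assume F: "elt UNIV F" and kernel: "lext sigmaIII F = 0"
  have shift: "F (n + 1, w) = F (n, w)" for n w
    using lext_sigmaIII_Cons[of F n w] F kernel by (simp add: elt_def)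
  show "F = 0"
  proof
    fix p :: "int \<times> int list"
    obtain n w where p: "p = (n, w)" by fastforce
    have "inj (\<lambda>j::nat. (n + int j, w))" by (auto simp: inj_def)
    moreover have "F (n + int (Suc j), w) = F (n + int j, w)" for j
      using shift[of "n + int j" w] by (simp add: algebra_simps)
    ultimately have "F (n, w) = 0"
      using F finsupp_zero_at_chain_start[of F "\<lambda>j. (n + int j, w)"] by (simp add: elt_def)
    then show "F p = 0 p" by (simp add: p)
  qed
qed

lemma typeIII: "comm_on UNIV mulIII \<and> assoc_on UNIV mulIII"
proof
  have stB_bext_commute: "bext stB f g = bext stB g f" for f g
    by (rule bext_commute) (rule B.stuffle_commute)
  show "comm_on UNIV mulIII"
    unfolding mulIII_def
  proof (rule comm_on_bext)
    fix x y :: "int \<times> int list"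
    obtain k u l v where "x = (k, u)" "y = (l, v)" by fastforce
    then show "mIII x y = mIII y x"
      by (simp add: stB_bext_commute add_ac B.stuffle_commute[of u v])
  qed
  show "assoc_on UNIV mulIII"
    unfolding mulIII_def
    using B.assoc_on_stuffle inj_on_lext_sigmaIII
    by (intro assoc_on_bext_pullback[where K = sigmaIII and M' = stB])
      (auto simp: sigmaIII_hom sigma_minus_eq)
qed

section \<open>Type \<open>\<widetilde>IV\<close>\<close>

lemma mem_VIV_iff [simp]: "One \<in> VIV" "ThW w \<in> VIV" "ZW k w \<in> VIV \<longleftrightarrow> 1 \<le> k"
  by (auto simp: VIV_def)

fun sigmaIV :: "bIV \<Rightarrow> nat list \<Rightarrow> rat" where
  "sigmaIV One = delta []"
| "sigmaIV (ThW w) = delta (1 # w)"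
| "sigmaIV (ZW k w) = sigma_plus k w"

lemma finsupp_sigmaIV [simp]: "finsupp (sigmaIV x)"
  by (cases x) (auto simp: sigma_plus_def)

lemma pZ_lext: "pZ k (lext K f) = lext (\<lambda>x. pZ k (K x)) f"
  by (auto simp: pZ_def lext_def fun_eq_iff split: bIV.split)

lemma pZ_delta [simp]: "pZ k (delta w) = delta (ZW k w)"
  by (auto simp: pZ_def delta_def fun_eq_iff split: bIV.split)

lemma pZ_eq_lext: "finsupp F \<Longrightarrow> pZ k F = lext (\<lambda>w. delta (ZW k w)) F"
  using pZ_lext[of k delta F] by (simp add: lext_delta_kernel)

lemma finsupp_pZ [simp]: "finsupp F \<Longrightarrow> finsupp (pZ k F)"
  by (simp add: pZ_eq_lext finsupp_lext)

lemma supp_pZ_subset_VIV: "1 \<le> k \<Longrightarrow> supp (pZ k F) \<subseteq> VIV"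
proof
  fix x assume "1 \<le> k" "x \<in> supp (pZ k F)"
  then show "x \<in> VIV" by (cases x) (auto simp: supp_def pZ_def split: if_splits)
qed

lemma pT_lext: "pT (lext K f) = lext (\<lambda>x. pT (K x)) f"
  by (auto simp: pT_def lext_def fun_eq_iff split: bIV.split)

lemma pT_delta [simp]: "pT (delta w) = delta (ThW w)"
  by (auto simp: pT_def delta_def fun_eq_iff split: bIV.split)

lemma pT_eq_lext: "finsupp F \<Longrightarrow> pT F = lext (\<lambda>w. delta (ThW w)) F"
  using pT_lext[of delta F] by (simp add: lext_delta_kernel)

lemma finsupp_pT [simp]: "finsupp F \<Longrightarrow> finsupp (pT F)"
  by (simp add: pT_eq_lext finsupp_lext)

lemma supp_pT_subset_VIV: "supp (pT F) \<subseteq> VIV"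
proof
  fix x assume "x \<in> supp (pT F)"
  then show "x \<in> VIV" by (cases x) (auto simp: supp_def pT_def)
qed

lemma finsupp_mIV: "finsupp (mIV x y)"
  by (cases x; cases y) (simp_all add: sigma_plus_def)

lemma supp_mIV_subset_VIV: "x \<in> VIV \<Longrightarrow> y \<in> VIV \<Longrightarrow> supp (mIV x y) \<subseteq> VIV"
  by (cases x; cases y; simp only: mIV.simps ladd_eq_plus lsub_eq_minus;
      (intro supp_add_subsetI supp_diff_subsetI supp_pZ_subset_VIV supp_pT_subset_VIV)?; simp)

lemma sigma_plus_eq: "sigma_plus k = (\<lambda>w. delta (k # w) + delta ((k - 1) # w))"
  by (rule ext) (simp add: sigma_plus_def)

lemma lext_sigmaIV_pZ:
  assumes F: "finsupp F"
  shows "lext sigmaIV (pZ k F) = pre k F + pre (k - 1) F"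
proof -
  have "lext sigmaIV (pZ k F) = lext (sigma_plus k) F"
    by (simp add: pZ_eq_lext[OF F] lext_lext[OF F])
  also have "\<dots> = pre k F + pre (k - 1) F"
    unfolding sigma_plus_eq lext_kernel_add pre_eq_lext[OF F] ..
  finally show ?thesis .
qed

lemma lext_sigmaIV_pT: "finsupp F \<Longrightarrow> lext sigmaIV (pT F) = pre 1 F"
  by (simp add: pT_eq_lext lext_lext pre_eq_lext)

lemma sigmaIV_hom_ZW_ThW:
  assumes "1 \<le> k"
  shows "lext sigmaIV (mIV (ZW k u) (ThW v)) = bext stC (sigmaIV (ZW k u)) (sigmaIV (ThW v))"
proof -
  obtain k' where "k = Suc k'" using assms by (cases k) auto
  then show ?thesis
    by (simp add: lext_add lext_sigmaIV_pZ lext_sigmaIV_pT bext_add_left bext_add_right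
        sigma_plus_def II.stuffle_Cons_Cons brII_def)
      (simp add: fun_eq_iff algebra_simps)
qed

lemma sigmaIV_hom:
  assumes x: "x \<in> VIV" and y: "y \<in> VIV"
  shows "lext sigmaIV (mIV x y) = bext stC (sigmaIV x) (sigmaIV y)"
proof (cases x)
  case One
  then show ?thesis by (simp add: bext_delta_left II.stuffle_Nil_eq_delta lext_delta_kernel)
next
  case (ThW u)
  show ?thesis
  proof (cases y)
    case One
    then show ?thesis using ThW by (simp add: bext_delta_right lext_delta_kernel)
  next
    case (ThW v)
    show ?thesis unfolding \<open>x = ThW u\<close> ThW
      by (simp add: lext_add lext_diff lext_sigmaIV_pZ lext_sigmaIV_pT II.stuffle_Cons_Cons brII_def)
        (simp add: fun_eq_iff algebra_simps numeral_2_eq_2)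
  next
    case (ZW l v)
    then have "1 \<le> l" using y by simp
    moreover have "bext stC f g = bext stC g f" for f g
      by (rule bext_commute) (rule II.stuffle_commute)
    ultimately show ?thesis using \<open>x = ThW u\<close> ZW sigmaIV_hom_ZW_ThW[of l v u] by simp
  qed
next
  case (ZW k u)
  then have k: "1 \<le> k" using x by simp
  show ?thesis
  proof (cases y)
    case One
    then show ?thesis using ZW lext_delta_kernel[OF finsupp_sigmaIV[of x]] by (simp add: bext_delta_right)
  next
    case (ThW v)
    then show ?thesis using ZW sigmaIV_hom_ZW_ThW[OF k] by simp
  next
    case (ZW l v)
    obtain k' l' where "k = Suc k'" "l = Suc l'" using k ZW y by (cases k; cases l) auto
    then show ?thesis unfolding \<open>x = ZW k u\<close> ZW
      by (simp add: lext_add lext_sigmaIV_pZ bext_add_left bext_add_right sigma_plus_def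
          II.stuffle_Cons_Cons brII_def)
        (simp add: fun_eq_iff algebra_simps)
  qed
qed

lemma lext_sigmaIV_Nil: "finsupp F \<Longrightarrow> lext sigmaIV F [] = F One"
proof -
  assume F: "finsupp F"
  then have A: "finite (insert One (supp F))" by simp
  have "lext sigmaIV F [] = (\<Sum>x\<in>insert One (supp F). F x * sigmaIV x [])"
    by (rule lext_eq_sum_superset[OF A]) auto
  also have "\<dots> = (\<Sum>x\<in>insert One (supp F). if x = One then F x else 0)"
  proof (rule sum.cong)
    fix x show "F x * sigmaIV x [] = (if x = One then F x else 0)"
      by (cases x) (auto simp: delta_def sigma_plus_def)
  qed simp
  also have "\<dots> = F One" using A by (simp add: sum.delta')
  finally show ?thesis .
qed

lemma lext_sigmaIV_Cons:
  assumes F: "finsupp F" and sF: "supp F \<subseteq> VIV"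
  shows "lext sigmaIV F (n # w) = (if n = 1 then F (ThW w) else 0) + F (ZW n w) + F (ZW (Suc n) w)"
proof -
  let ?D = "{ThW w, ZW n w, ZW (Suc n) w}"
  have A: "finite (supp F \<union> ?D)" using F by simp
  have "lext sigmaIV F (n # w) = (\<Sum>x\<in>supp F \<union> ?D. F x * sigmaIV x (n # w))"
    by (rule lext_eq_sum_superset[OF A]) auto
  also have "\<dots> = (\<Sum>x\<in>?D. F x * sigmaIV x (n # w))"
  proof (rule sum.mono_neutral_right[OF A])
    show "\<forall>x\<in>supp F \<union> ?D - ?D. F x * sigmaIV x (n # w) = 0"
    proof
      fix x assume x: "x \<in> supp F \<union> ?D - ?D"
      show "F x * sigmaIV x (n # w) = 0"
      proof (cases "F x = 0")
        case False
        then have "x \<in> VIV" using sF by (auto simp: supp_def)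
        then have "sigmaIV x (n # w) = 0" using x
          by (cases x) (auto simp: delta_def sigma_plus_def)
        then show ?thesis by simp
      qed simp
    qed
  qed blast
  also have "\<dots> = (if n = 1 then F (ThW w) else 0) + F (ZW n w) * (if n = 0 then 2 else 1) + F (ZW (Suc n) w)"
    by (auto simp: delta_def sigma_plus_def)
    \<comment> \<open>\<open>sigma_plus 0 w = 2 \<cdot> delta (0 # w)\<close> by truncated subtraction; harmless, as \<open>ZW 0 w \<notin> VIV\<close>\<close>
  also have "\<dots> = (if n = 1 then F (ThW w) else 0) + F (ZW n w) + F (ZW (Suc n) w)"
    using sF by (auto simp: supp_def)
  finally show ?thesis .
qed

lemma inj_on_lext_sigmaIV: "inj_on (lext sigmaIV) {F. elt VIV F}"
proof (rule inj_on_lext)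
  fix F assume "elt VIV F" and kernel: "lext sigmaIV F = 0"
  then have F: "finsupp F" and sF: "supp F \<subseteq> VIV" by (auto simp: elt_def)
  have coeff: "(if n = 1 then F (ThW w) else 0) + F (ZW n w) + F (ZW (Suc n) w) = 0" for n w
    using lext_sigmaIV_Cons[OF F sF, of n w] kernel by simp
  have Z0: "F (ZW 0 w) = 0" for w
    using sF by (auto simp: supp_def)
  have Z1: "F (ZW 1 w) = 0" for w
    using coeff[of 0 w] Z0[of w] by simp
  have Z2: "F (ZW (Suc (Suc m)) w) = 0" for m w
  proof -
    have "inj (\<lambda>j. ZW (Suc (Suc (m + j))) w)" by (auto simp: inj_def)
    moreover have "F (ZW (Suc (Suc (m + Suc j))) w) = - F (ZW (Suc (Suc (m + j))) w)" for j
      using coeff[of "Suc (Suc (m + j))" w] by simp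
    ultimately show ?thesis
      using finsupp_zero_at_chain_start[OF F, of "\<lambda>j. ZW (Suc (Suc (m + j))) w"] by simp
  qed
  have "F (ZW k w) = 0" for k w
  proof (cases k)
    case (Suc k')
    then show ?thesis using Z1 Z2 by (cases k') auto
  qed (use Z0 in simp)
  moreover have "F (ThW w) = 0" for w
    using coeff[of 1 w] Z1[of w] Z2[of 0 w] by simp
  moreover have "F One = 0"
    using lext_sigmaIV_Nil[OF F] kernel by simp
  ultimately show "F = 0"
    by (intro ext) (metis bIV.exhaust zero_fun_apply)
qed

lemma typeIV: "comm_on VIV mulIV \<and> assoc_on VIV mulIV"
proof
  have stC_bext_commute: "bext stC f g = bext stC g f" for f g
    by (rule bext_commute) (rule II.stuffle_commute)
  show "comm_on VIV mulIV"
    unfolding mulIV_def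
  proof (rule comm_on_bext)
    fix x y
    show "mIV x y = mIV y x"
      by (cases x; cases y) (simp_all add: stC_bext_commute II.stuffle_commute add_ac)
  qed
  show "assoc_on VIV mulIV"
    unfolding mulIV_def
    using finsupp_mIV supp_mIV_subset_VIV sigmaIV_hom II.assoc_on_stuffle inj_on_lext_sigmaIV
    by (intro assoc_on_bext_pullback[where K = sigmaIV and M' = stC]) simp_all
qed

theorem proposition4p6:
  shows "(comm_on WI mulI \<and> assoc_on WI mulI)
       \<and> (comm_on UNIV mulII \<and> assoc_on UNIV mulII)
       \<and> (comm_on UNIV mulIII \<and> assoc_on UNIV mulIII)
       \<and> (comm_on VIV mulIV \<and> assoc_on VIV mulIV)"
  using typeI typeII typeIII typeIV by blast

end
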